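(* For every seller $j\in[m]$, the probability that the mechanism $\mathbb{M}_{\text{add}}$ makes seller $j$ an offer (for her bundle $S_j$ at payment $p(S_j)$) that she accepts is exactly $1/2$.
   Context: Two-sided market: buyers $[n]$, sellers $[m]$, items $[k]$; seller $j$ owns $I_j$ ($I_j$ disjoint, covering $[k]$). Buyer valuations $v_i$ are monotone normalized XOS functions on $2^{[k]}$ drawn independently from public distributions $G_i$; seller $j$'s valuation $w_j$ is additive over subsets of $I_j$, drawn independently from a public distribution $F_j$. For XOS $v$ and $T\subseteq[k]$, $a(v,T,\cdot)$ is a fixed additive function with $a(v,T,T)=v(T)$, $a(v,T,S)\le v(S)$. $\mathbb{A}$ maps each buyer profile $\mathbf v$ to an allocation $X^{\mathbb A}(\mathbf v)$ of disjoint bundles to buyers. $\mathrm{SW}^B_\ell(\mathbf v)=a(v_i,X^{\mathbb A}_i(\mathbf v),\{\ell\})$ if $\ell\in X^{\mathbb A}_i(\mathbf v)$, else $0$; $\mathrm{SW}^S_\ell(\mathbf w)=w_j(\{\ell\})$ for $\ell\in I_j$. $L_j=\{\ell\in I_j:\mathbb{E}[\mathrm{SW}^B_\ell]\ge4\mathbb{E}[\mathrm{SW}^S_\ell]\}$, $L=\bigcup_jL_j$, $p_\ell=\frac12\mathbb{E}[\mathrm{SW}^B_\ell(\mathbf v)]$ for $\ell\in L$. Mechanism $\mathbb{M}_{\text{add}}$: $\Lambda_1=L$; buyers $i=1,\dots,n$ in turn request a bundle $B_i\subseteq\Lambda_i$ maximizing their expected utility at prices $p_\ell$, and $\Lambda_{i+1}=\Lambda_i\setminus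 B_i$. Let $B=\bigcup_iB_i$. For each seller $j$: $S_j=B\cap L_j$, $p(S_j)=\sum_{\ell\in S_j}p_\ell$, $q_j=1/(2\Pr[w_j(S_j)\le p(S_j)])$; with probability $q_j$ the mechanism offers $j$ payment $p(S_j)$ for $S_j$, and she accepts iff $w_j(S_j)\le p(S_j)$; on acceptance items of $S_j$ go to their requesting buyers at prices $p_\ell$. *)

theory Defs
  imports "HOL-Probability.Probability"
begin

text \<open>Items are elements of a finite type 'i, sellers of a finite type 'j;
  seller ownership is a function owner :: 'i => 'j, so I_j = {l. owner l = j}
  (disjoint and covering). Buyers are 0,...,n-1 (buyer i+1 of the paper is i here).\<close>

definition additive_set_fun :: "('i::finite set \<Rightarrow> real) \<Rightarrow> bool" where
  "additive_set_fun f \<longleftrightarrow> (\<forall>S. f S = (\<Sum>l\<in>S. f {l}))"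

definition xos :: "('i::finite set \<Rightarrow> real) \<Rightarrow> bool" where
  "xos v \<longleftrightarrow> (\<exists>A. finite A \<and> A \<noteq> {} \<and>
      (\<forall>f\<in>A. additive_set_fun f \<and> (\<forall>l. 0 \<le> f {l})) \<and>
      (\<forall>S. v S = Max ((\<lambda>f. f S) ` A)))"

definition monotone_normalized :: "('i set \<Rightarrow> real) \<Rightarrow> bool" where
  "monotone_normalized v \<longleftrightarrow> v {} = 0 \<and> (\<forall>S T. S \<subseteq> T \<longrightarrow> v S \<le> v T)"

text \<open>Measurable space of buyer valuations (set functions) and of seller valuations
  (additive, given by per-item values).\<close>
definition val_space :: "('i::finite set \<Rightarrow> real) measure" where
  "val_space = PiM UNIV (\<lambda>_. borel)"

definition item_space :: "('i::finite \<Rightarrow> real) measure" where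
  "item_space = PiM UNIV (\<lambda>_. borel)"

definition buyer_space :: "nat \<Rightarrow> (nat \<Rightarrow> ('i set \<Rightarrow> real) measure) \<Rightarrow> (nat \<Rightarrow> 'i set \<Rightarrow> real) measure" where
  "buyer_space n G = PiM {..<n} G"

definition SWB :: "nat \<Rightarrow> (('i set \<Rightarrow> real) \<Rightarrow> 'i set \<Rightarrow> 'i set \<Rightarrow> real)
    \<Rightarrow> ((nat \<Rightarrow> 'i set \<Rightarrow> real) \<Rightarrow> nat \<Rightarrow> 'i set) \<Rightarrow> 'i \<Rightarrow> (nat \<Rightarrow> 'i set \<Rightarrow> real) \<Rightarrow> real" where
  "SWB n a X l v = (\<Sum>i<n. if l \<in> X v i then a (v i) (X v i) {l} else 0)"

definition EB where
  "EB n G a X l = (\<integral>v. SWB n a X l v \<partial>buyer_space n G)"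

definition ES :: "('j \<Rightarrow> ('i \<Rightarrow> real) measure) \<Rightarrow> ('i \<Rightarrow> 'j) \<Rightarrow> 'i \<Rightarrow> real" where
  "ES F owner l = (\<integral>w. w l \<partial>F (owner l))"

definition Lset where
  "Lset n G a X F owner = {l. EB n G a X l \<ge> 4 * ES F owner l}"

definition price where
  "price n G a X l = EB n G a X l / 2"

text \<open>Sequential posted-price phase: avail D L v i is Lambda_{i}, D is the buyers' demand rule.\<close>
fun avail :: "(nat \<Rightarrow> ('i set \<Rightarrow> real) \<Rightarrow> 'i set \<Rightarrow> 'i set) \<Rightarrow> 'i set
    \<Rightarrow> (nat \<Rightarrow> 'i set \<Rightarrow> real) \<Rightarrow> nat \<Rightarrow> 'i set" where
  "avail D L v 0 = L"
| "avail D L v (Suc i) = avail D L v i - D i (v i) (avail D L v i)"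

definition requested where
  "requested D L v i = D i (v i) (avail D L v i)"

definition bought where
  "bought n D L v = (\<Union>i<n. requested D L v i)"

definition Sj where
  "Sj n D L owner j v = bought n D L v \<inter> {l \<in> L. owner l = j}"

definition pset :: "('i \<Rightarrow> real) \<Rightarrow> 'i set \<Rightarrow> real" where
  "pset p S = (\<Sum>l\<in>S. p l)"

definition accept_prob :: "('j \<Rightarrow> ('i \<Rightarrow> real) measure) \<Rightarrow> ('i \<Rightarrow> real) \<Rightarrow> 'j \<Rightarrow> 'i set \<Rightarrow> real" where
  "accept_prob F p j S = measure (F j) {w \<in> space (F j). (\<Sum>l\<in>S. w l) \<le> pset p S}"

definition offer_prob where
  "offer_prob F p j S = 1 / (2 * accept_prob F p j S)"

text \<open>Full probability space: buyer valuations, seller valuations, and independent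
  uniform [0,1] coins c_j; the offer to seller j is made iff c_j < q_j.\<close>
definition mech_space :: "nat \<Rightarrow> (nat \<Rightarrow> ('i set \<Rightarrow> real) measure) \<Rightarrow> ('j::finite \<Rightarrow> ('i \<Rightarrow> real) measure)
    \<Rightarrow> ((nat \<Rightarrow> 'i set \<Rightarrow> real) \<times> ('j \<Rightarrow> 'i \<Rightarrow> real) \<times> ('j \<Rightarrow> real)) measure" where
  "mech_space n G F = buyer_space n G \<Otimes>\<^sub>M (PiM UNIV F \<Otimes>\<^sub>M PiM UNIV (\<lambda>_. uniform_measure lborel {0..1::real}))"

definition offer_accepted_event where
  "offer_accepted_event n G a X F owner D j =
    (let L = Lset n G a X F owner; p = price n G a X in
     {(v, w, c) \<in> space (mech_space n G F).
        c j < offer_prob F p j (Sj n D L owner j v) \<and>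
        (\<Sum>l\<in>Sj n D L owner j v. w j l) \<le> pset p (Sj n D L owner j v)})"

end

theory Submission
  imports Defs
begin

text \<open>Condition on the buyers' valuations: they determine the bundle \<open>S\<^sub>j\<close>, while seller \<open>j\<close>'s
  valuation and the coin deciding the offer are independent of them. Every item of \<open>S\<^sub>j\<close> lies in
  \<open>L\<^sub>j\<close>, so the posted payment \<open>p(S\<^sub>j)\<close> is at least twice the seller's expected value for \<open>S\<^sub>j\<close>, and
  by Markov's inequality she accepts with probability at least \<open>1/2\<close>. Hence \<open>q\<^sub>j \<le> 1\<close> is a genuine
  probability, and offer and acceptance together happen with probability
  \<open>q\<^sub>j \<cdot> Pr[accept] = 1/2\<close> for every fixed bundle; averaging over the buyers gives \<open>1/2\<close>.\<close>

lemma measurable_UN_count_space: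
  fixes f :: "'k \<Rightarrow> 'a \<Rightarrow> 'b::finite set"
  assumes "finite I" and "\<And>i. i \<in> I \<Longrightarrow> f i \<in> measurable M (count_space UNIV)"
  shows "(\<lambda>x. \<Union>i\<in>I. f i x) \<in> measurable M (count_space UNIV)"
  using assms
proof (induction I rule: finite_induct)
  case (insert i I)
  have "(\<lambda>x. (\<lambda>T x. f i x \<union> T) (\<Union>i\<in>I. f i x) x) \<in> measurable M (count_space UNIV)"
  proof (rule measurable_compose_countable'[where I=UNIV and f="\<lambda>T x. f i x \<union> T"
        and g="\<lambda>x. \<Union>i\<in>I. f i x"])
    fix T :: "'b set"
    show "(\<lambda>x. f i x \<union> T) \<in> measurable M (count_space UNIV)"
      using measurable_compose[OF insert.prems[of i] measurable_count_space, of "\<lambda>s. s \<union> T"] by simp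
  qed (use insert in auto)
  then show ?case by simp
qed simp

lemma measurable_avail:
  fixes L :: "'i::finite set"
  assumes "\<And>i \<Lambda>. i < n \<Longrightarrow> (\<lambda>v. D i (v i) \<Lambda>) \<in> measurable M (count_space UNIV)"
  shows "k \<le> n \<Longrightarrow> (\<lambda>v. avail D L v k) \<in> measurable M (count_space UNIV)"
proof (induction k)
  case (Suc k)
  have "(\<lambda>v. (\<lambda>\<Lambda> v. \<Lambda> - D k (v k) \<Lambda>) (avail D L v k) v) \<in> measurable M (count_space UNIV)"
  proof (rule measurable_compose_countable'[where I=UNIV and f="\<lambda>\<Lambda> v. \<Lambda> - D k (v k) \<Lambda>"
        and g="\<lambda>v. avail D L v k"])
    fix \<Lambda> :: "'i set"
    show "(\<lambda>v. \<Lambda> - D k (v k) \<Lambda>) \<in> measurable M (count_space UNIV)"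
      using measurable_compose[OF assms[of k \<Lambda>] measurable_count_space, of "\<lambda>s. \<Lambda> - s"] Suc.prems
      by simp
  qed (use Suc in auto)
  then show ?case by simp
qed simp

lemma measurable_bought:
  fixes L :: "'i::finite set"
  assumes D: "\<And>i \<Lambda>. i < n \<Longrightarrow> (\<lambda>v. D i (v i) \<Lambda>) \<in> measurable M (count_space UNIV)"
  shows "(\<lambda>v. bought n D L v) \<in> measurable M (count_space UNIV)"
  unfolding bought_def
proof (rule measurable_UN_count_space)
  fix i assume "i \<in> {..<n}"
  then show "(\<lambda>v. requested D L v i) \<in> measurable M (count_space UNIV)"
    unfolding requested_def
    by (intro measurable_compose_countable'[where I=UNIV and f="\<lambda>\<Lambda> v. D i (v i) \<Lambda>"
          and g="\<lambda>v. avail D L v i"] measurable_avail[OF D] D) auto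
qed simp

lemma measurable_Sj:
  fixes owner :: "'i::finite \<Rightarrow> 'j"
  assumes G_sets: "\<And>i. i < n \<Longrightarrow> sets (G i) = sets val_space"
    and D_meas: "\<And>i \<Lambda>. i < n \<Longrightarrow> (\<lambda>v. D i v \<Lambda>) \<in> measurable val_space (count_space UNIV)"
  shows "Sj n D L owner j \<in> measurable (buyer_space n G) (count_space UNIV)"
proof -
  have "(\<lambda>v. D i (v i) \<Lambda>) \<in> measurable (buyer_space n G) (count_space UNIV)" if "i < n" for i \<Lambda>
  proof -
    have "(\<lambda>v. v i) \<in> measurable (buyer_space n G) (G i)"
      unfolding buyer_space_def using that by (intro measurable_component_singleton) auto
    then have "(\<lambda>v. v i) \<in> measurable (buyer_space n G) val_space"
      using measurable_cong_sets[OF refl G_sets[OF that]] by blast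
    then show ?thesis using D_meas[OF that] by (rule measurable_compose)
  qed
  then show ?thesis
    unfolding Sj_def
    by (intro measurable_compose[OF measurable_bought measurable_count_space]) auto
qed

lemma (in prob_space) prob_le_ge_half:
  fixes Y :: "'a \<Rightarrow> real"
  assumes int: "integrable M Y" and nonneg: "AE x in M. 0 \<le> Y x"
    and c: "2 * expectation Y \<le> c"
  shows "1/2 \<le> prob {x \<in> space M. Y x \<le> c}"
proof -
  have [measurable]: "Y \<in> borel_measurable M" using int by auto
  show ?thesis
  proof (cases "c > 0")
    case True
    have "prob {x \<in> space M. c \<le> Y x} \<le> expectation Y / c"
      using int nonneg True by (intro integral_Markov_inequality_measure[where A="space M"]) auto
    also have "\<dots> \<le> 1/2" using c True by (simp add: field_simps)
    finally have "prob {x \<in> space M. c \<le> Y x} \<le> 1/2" .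
    moreover have "1 = prob ({x \<in> space M. Y x \<le> c} \<union> {x \<in> space M. c \<le> Y x})"
      by (subst prob_space[symmetric]) (auto intro!: arg_cong[where f=prob])
    moreover have "\<dots> \<le> prob {x \<in> space M. Y x \<le> c} + prob {x \<in> space M. c \<le> Y x}"
      by (intro measure_subadditive) auto
    ultimately show ?thesis by linarith
  next
    case False
    then have "expectation Y = 0" "c = 0" using c integral_nonneg_AE[OF nonneg] by linarith+
    then have "AE x in M. Y x \<le> c" using integral_nonneg_eq_0_iff_AE[OF int nonneg] by auto
    then have "prob {x \<in> space M. Y x \<le> c} = 1" by (subst prob_Collect_eq_1) auto
    then show ?thesis by simp
  qed
qed

lemma accept_prob_ge_half:
  fixes F :: "'j \<Rightarrow> ('i::finite \<Rightarrow> real) measure"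
  assumes prob: "prob_space (F j)" and nonneg: "AE w in F j. \<forall>l. 0 \<le> w l"
    and int: "\<And>l. integrable (F j) (\<lambda>w. w l)"
    and price: "\<And>l. l \<in> T \<Longrightarrow> 2 * (\<integral>w. w l \<partial>F j) \<le> p l"
  shows "1/2 \<le> accept_prob F p j T"
proof -
  interpret prob_space "F j" by (fact prob)
  have "2 * (\<integral>w. (\<Sum>l\<in>T. w l) \<partial>F j) = (\<Sum>l\<in>T. 2 * (\<integral>w. w l \<partial>F j))"
    using int by (simp add: sum_distrib_left)
  also have "\<dots> \<le> pset p T"
    unfolding pset_def using price by (intro sum_mono)
  finally show ?thesis
    unfolding accept_prob_def
    using nonneg int by (intro prob_le_ge_half) (auto elim!: AE_mp intro!: sum_nonneg)
qed

lemma accept_prob_Sj_ge_half: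
  fixes F :: "'j \<Rightarrow> ('i::finite \<Rightarrow> real) measure"
  assumes "prob_space (F j)" and "AE w in F j. \<forall>l. 0 \<le> w l"
    and "\<And>l. integrable (F j) (\<lambda>w. w l)"
  shows "1/2 \<le> accept_prob F (price n G a X) j (Sj n D (Lset n G a X F owner) owner j v)"
proof (rule accept_prob_ge_half[where F=F and j=j, OF assms])
  fix l assume "l \<in> Sj n D (Lset n G a X F owner) owner j v"
  then show "2 * (\<integral>w. w l \<partial>F j) \<le> price n G a X l"
    by (auto simp: Sj_def Lset_def price_def ES_def)
qed

lemma measure_uniform_lessThan:
  fixes t :: real
  assumes "0 \<le> t" "t \<le> 1"
  shows "measure (uniform_measure lborel {0..1}) {..<t} = t"
proof -
  have "emeasure (uniform_measure lborel {0..1::real}) {..<t}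
      = emeasure lborel ({0..1} \<inter> {..<t}) / emeasure lborel {0..1::real}"
    by (rule emeasure_uniform_measure) auto
  also have "{0..1} \<inter> {..<t} = {0..<t}" using assms by auto
  finally show ?thesis
    unfolding measure_def using assms by (simp add: divide_ennreal_def)
qed

lemma measure_pair_measure_Times:
  assumes "sigma_finite_measure N" "A \<in> sets M" "B \<in> sets N"
  shows "measure (M \<Otimes>\<^sub>M N) (A \<times> B) = measure M A * measure N B"
proof -
  interpret N: sigma_finite_measure N by fact
  have "emeasure (M \<Otimes>\<^sub>M N) (A \<times> B) = emeasure M A * emeasure N B"
    using assms by (intro N.emeasure_pair_measure_Times) auto
  then show ?thesis unfolding measure_def by (simp add: enn2real_mult)
qed

lemma measure_PiM_component_vimage:
  assumes "\<And>i. i \<in> I \<Longrightarrow> prob_space (M i)" "i \<in> I" "A \<in> sets (M i)"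
  shows "measure (PiM I M) ((\<lambda>\<omega>. \<omega> i) -` A \<inter> space (PiM I M)) = measure (M i) A"
proof -
  have "(\<lambda>\<omega>. \<omega> i) \<in> measurable (PiM I M) (M i)"
    using assms(2) by (rule measurable_component_singleton)
  then have "measure (PiM I M) ((\<lambda>\<omega>. \<omega> i) -` A \<inter> space (PiM I M))
      = measure (distr (PiM I M) (M i) (\<lambda>\<omega>. \<omega> i)) A"
    using assms(3) by (simp add: measure_distr)
  also have "distr (PiM I M) (M i) (\<lambda>\<omega>. \<omega> i) = M i"
    using assms(1,2) by (rule distr_PiM_component)
  finally show ?thesis .
qed

lemma measure_pair_measure_const_sections:
  fixes S :: "'a \<Rightarrow> 'b::countable"
  assumes M: "prob_space M" and N: "prob_space N"
    and S: "S \<in> measurable M (count_space UNIV)" and E: "\<And>T. E T \<in> sets N"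
    and r: "\<And>x. x \<in> space M \<Longrightarrow> measure N (E (S x)) = r"
  shows "measure (M \<Otimes>\<^sub>M N) {(x, y) \<in> space (M \<Otimes>\<^sub>M N). y \<in> E (S x)} = r"
proof -
  interpret M: prob_space M by fact
  interpret N: prob_space N by fact
  let ?A = "{(x, y) \<in> space (M \<Otimes>\<^sub>M N). y \<in> E (S x)}"
  have "?A = (\<Union>T. (S -` {T} \<inter> space M) \<times> E T)"
    using sets.sets_into_space[OF E] by (auto simp: space_pair_measure)
  also have "\<dots> \<in> sets (M \<Otimes>\<^sub>M N)"
    using measurable_sets[OF S] E by (intro sets.countable_UN pair_measureI) auto
  finally have A: "?A \<in> sets (M \<Otimes>\<^sub>M N)" .
  have "emeasure (M \<Otimes>\<^sub>M N) ?A = (\<integral>\<^sup>+x. emeasure N (Pair x -` ?A) \<partial>M)"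
    using A by (rule N.emeasure_pair_measure_alt)
  also have "\<dots> = (\<integral>\<^sup>+x. ennreal r \<partial>M)"
  proof (rule nn_integral_cong)
    fix x assume "x \<in> space M"
    then have "Pair x -` ?A = E (S x)"
      using sets.sets_into_space[OF E] by (auto simp: space_pair_measure)
    then show "emeasure N (Pair x -` ?A) = ennreal r"
      using r[OF \<open>x \<in> space M\<close>] by (simp add: N.emeasure_eq_measure)
  qed
  also have "\<dots> = ennreal r" by (simp add: M.emeasure_space_1)
  finally have "emeasure (M \<Otimes>\<^sub>M N) ?A = ennreal r" .
  moreover have "0 \<le> r"
    using M.not_empty r by fastforce
  ultimately show ?thesis by (simp add: measure_def)
qed

definition coin_space :: "('j \<Rightarrow> real) measure" where
  "coin_space = PiM UNIV (\<lambda>_. uniform_measure lborel {0..1})"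

lemma prob_space_coin_space: "prob_space coin_space"
  unfolding coin_space_def by (intro prob_space_PiM prob_space_uniform_measure) auto

lemma sets_component_coin_event:
  fixes F :: "'j \<Rightarrow> 'a measure"
  assumes "A \<in> sets (F j)"
  shows "{(w, c) \<in> space (PiM UNIV F \<Otimes>\<^sub>M coin_space).
      w j \<in> A \<and> c j < t} \<in> sets (PiM UNIV F \<Otimes>\<^sub>M coin_space)"
    (is "?E \<in> sets (?W \<Otimes>\<^sub>M ?U)")
proof -
  have "?E = ((\<lambda>w. w j) -` A \<inter> space ?W) \<times> ((\<lambda>c. c j) -` {..<t} \<inter> space ?U)"
    by (auto simp: space_pair_measure)
  also have "\<dots> \<in> sets (?W \<Otimes>\<^sub>M ?U)"
    using assms unfolding coin_space_def
    by (intro pair_measureI measurable_sets[OF measurable_component_singleton]) auto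
  finally show ?thesis .
qed

lemma measure_component_coin_event:
  fixes F :: "'j \<Rightarrow> 'a measure"
  assumes F: "\<And>j. prob_space (F j)" and A: "A \<in> sets (F j)" and t: "0 \<le> t" "t \<le> 1"
  shows "measure (PiM UNIV F \<Otimes>\<^sub>M coin_space)
      {(w, c) \<in> space (PiM UNIV F \<Otimes>\<^sub>M coin_space).
        w j \<in> A \<and> c j < t} = measure (F j) A * t"
    (is "measure (?W \<Otimes>\<^sub>M ?U) ?E = _")
proof -
  have "?E = ((\<lambda>w. w j) -` A \<inter> space ?W) \<times> ((\<lambda>c. c j) -` {..<t} \<inter> space ?U)"
    by (auto simp: space_pair_measure)
  also have "measure (?W \<Otimes>\<^sub>M ?U) \<dots>
      = measure ?W ((\<lambda>w. w j) -` A \<inter> space ?W) *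
        measure ?U ((\<lambda>c. c j) -` {..<t} \<inter> space ?U)"
    using A unfolding coin_space_def
    by (intro measure_pair_measure_Times prob_space_imp_sigma_finite prob_space_PiM
        prob_space_uniform_measure measurable_sets[OF measurable_component_singleton]) auto
  also have "measure ?W ((\<lambda>w. w j) -` A \<inter> space ?W) = measure (F j) A"
    using F A by (intro measure_PiM_component_vimage) auto
  also have "measure ?U ((\<lambda>c. c j) -` {..<t} \<inter> space ?U)
      = measure (uniform_measure lborel {0..1}) {..<t}"
    unfolding coin_space_def by (intro measure_PiM_component_vimage prob_space_uniform_measure) auto
  also have "\<dots> = t"
    using t by (rule measure_uniform_lessThan)
  finally show ?thesis .
qed

lemma sets_accept_region:
  fixes F :: "'j \<Rightarrow> ('i::finite \<Rightarrow> real) measure"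
  assumes "sets (F j) = sets item_space"
  shows "{w \<in> space (F j). (\<Sum>l\<in>T. w l) \<le> pset p T} \<in> sets (F j)"
proof -
  have "(\<lambda>w. \<Sum>l\<in>T. w l) \<in> borel_measurable item_space"
    unfolding item_space_def by measurable
  then have "(\<lambda>w. \<Sum>l\<in>T. w l) \<in> borel_measurable (F j)"
    using measurable_cong_sets[OF assms refl] by blast
  then show ?thesis by measurable
qed

lemma offered_and_accepted_eq_coin_event:
  fixes F :: "'j \<Rightarrow> ('i::finite \<Rightarrow> real) measure"
  shows "{(w, c) \<in> space (PiM UNIV F \<Otimes>\<^sub>M coin_space).
      c j < offer_prob F p j T \<and> (\<Sum>l\<in>T. w j l) \<le> pset p T}
    = {(w, c) \<in> space (PiM UNIV F \<Otimes>\<^sub>M coin_space).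
      w j \<in> {x \<in> space (F j). (\<Sum>l\<in>T. x l) \<le> pset p T} \<and> c j < offer_prob F p j T}"
  by (auto simp: space_pair_measure space_PiM)

lemma sets_offered_and_accepted:
  fixes F :: "'j \<Rightarrow> ('i::finite \<Rightarrow> real) measure"
  assumes "sets (F j) = sets item_space"
  shows "{(w, c) \<in> space (PiM UNIV F \<Otimes>\<^sub>M coin_space).
      c j < offer_prob F p j T \<and> (\<Sum>l\<in>T. w j l) \<le> pset p T}
    \<in> sets (PiM UNIV F \<Otimes>\<^sub>M coin_space)"
  unfolding offered_and_accepted_eq_coin_event
  by (intro sets_component_coin_event sets_accept_region assms)

lemma measure_offered_and_accepted:
  fixes F :: "'j \<Rightarrow> ('i::finite \<Rightarrow> real) measure"
  assumes F_prob: "\<And>j. prob_space (F j)" and F_sets: "sets (F j) = sets item_space"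
    and accept: "1/2 \<le> accept_prob F p j T"
  shows "measure (PiM UNIV F \<Otimes>\<^sub>M coin_space)
      {(w, c) \<in> space (PiM UNIV F \<Otimes>\<^sub>M coin_space).
        c j < offer_prob F p j T \<and> (\<Sum>l\<in>T. w j l) \<le> pset p T} = 1/2"
proof -
  have "accept_prob F p j T \<le> 1"
    unfolding accept_prob_def using F_prob by (rule prob_space.prob_le_1)
  then have "0 \<le> offer_prob F p j T" "offer_prob F p j T \<le> 1"
    using accept by (auto simp: offer_prob_def field_simps)
  then have "measure (PiM UNIV F \<Otimes>\<^sub>M coin_space)
      {(w, c) \<in> space (PiM UNIV F \<Otimes>\<^sub>M coin_space).
        c j < offer_prob F p j T \<and> (\<Sum>l\<in>T. w j l) \<le> pset p T}
      = accept_prob F p j T * offer_prob F p j T"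
    unfolding offered_and_accepted_eq_coin_event accept_prob_def
    by (intro measure_component_coin_event sets_accept_region F_prob F_sets)
  also have "\<dots> = 1/2"
    using accept by (simp add: offer_prob_def)
  finally show ?thesis .
qed

theorem proposition5:
  fixes n :: nat
    and owner :: "'i::finite \<Rightarrow> 'j::finite"
    and G :: "nat \<Rightarrow> ('i set \<Rightarrow> real) measure"
    and F :: "'j \<Rightarrow> ('i \<Rightarrow> real) measure"
    and a :: "('i set \<Rightarrow> real) \<Rightarrow> 'i set \<Rightarrow> 'i set \<Rightarrow> real"
    and X :: "(nat \<Rightarrow> 'i set \<Rightarrow> real) \<Rightarrow> nat \<Rightarrow> 'i set"
    and EU :: "nat \<Rightarrow> ('i set \<Rightarrow> real) \<Rightarrow> 'i set \<Rightarrow> real"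
    and D :: "nat \<Rightarrow> ('i set \<Rightarrow> real) \<Rightarrow> 'i set \<Rightarrow> 'i set"
    and j :: 'j
  assumes G_prob: "\<And>i. i < n \<Longrightarrow> prob_space (G i)"
    and G_sets: "\<And>i. i < n \<Longrightarrow> sets (G i) = sets val_space"
    and G_xos: "\<And>i. i < n \<Longrightarrow> AE v in G i. xos v \<and> monotone_normalized v"
    and F_prob: "\<And>j. prob_space (F j)"
    and F_sets: "\<And>j. sets (F j) = sets item_space"
    and F_nonneg: "\<And>j. AE w in F j. \<forall>l. 0 \<le> w l"
    and F_int: "\<And>j l. integrable (F j) (\<lambda>w. w l)"
    and a_supp: "\<And>v T. xos v \<Longrightarrow> additive_set_fun (a v T) \<and> a v T T = v T \<and> (\<forall>S. a v T S \<le> v S)"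
    and X_disj: "\<And>v i i'. i < n \<Longrightarrow> i' < n \<Longrightarrow> i \<noteq> i' \<Longrightarrow> X v i \<inter> X v i' = {}"
    and SWB_int: "\<And>l. integrable (buyer_space n G) (SWB n a X l)"
    and D_sub: "\<And>i v \<Lambda>. D i v \<Lambda> \<subseteq> \<Lambda>"
    and D_opt: "\<And>i v \<Lambda> T. T \<subseteq> \<Lambda> \<Longrightarrow> EU i v T \<le> EU i v (D i v \<Lambda>)"
    and D_meas: "\<And>i \<Lambda>. i < n \<Longrightarrow> (\<lambda>v. D i v \<Lambda>) \<in> measurable val_space (count_space UNIV)"
  shows "measure (mech_space n G F) (offer_accepted_event n G a X F owner D j) = 1 / 2"
proof -
  let ?p = "price n G a X"
  let ?S = "Sj n D (Lset n G a X F owner) owner j"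
  let ?B = "buyer_space n G"
  let ?WU = "PiM UNIV F \<Otimes>\<^sub>M coin_space"
  let ?E = "\<lambda>T. {(w, c) \<in> space ?WU. c j < offer_prob F ?p j T \<and> (\<Sum>l\<in>T. w j l) \<le> pset ?p T}"
  have B: "prob_space ?B"
    unfolding buyer_space_def using G_prob by (intro prob_space_PiM) auto
  have WU: "prob_space ?WU"
    using F_prob prob_space_coin_space by (intro prob_space_pair prob_space_PiM) auto
  have "offer_accepted_event n G a X F owner D j
      = {(v, z) \<in> space (?B \<Otimes>\<^sub>M ?WU). z \<in> ?E (?S v)}"
    unfolding offer_accepted_event_def mech_space_def coin_space_def Let_def
    by (auto simp: space_pair_measure)
  also have "measure (?B \<Otimes>\<^sub>M ?WU) \<dots> = 1/2"
  proof (rule measure_pair_measure_const_sections[OF B WU measurable_Sj[OF G_sets D_meas]])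
    show "?E T \<in> sets ?WU" for T
      using F_sets by (rule sets_offered_and_accepted)
    show "measure ?WU (?E (?S v)) = 1/2" for v
      using accept_prob_Sj_ge_half[where F=F and j=j, OF F_prob F_nonneg F_int]
      by (rule measure_offered_and_accepted[where F=F and j=j, OF F_prob F_sets])
  qed
  finally show ?thesis
    unfolding mech_space_def coin_space_def .
qed

end
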